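(* For each $i$ (indices mod $8g-4$): (i) the angle at $V_{i+1}$ between the geodesics $V_{i+1}P_{i+2}$ and $V_{i+1}Q_{i+1}$ is greater than $\pi/4$; (ii) the angle at $V_i$ between the geodesics $V_iQ_{i-1}$ and $V_iP_i$ is greater than $\pi/4$.
   Context: Fix $g\ge 2$. Let $\mathcal F$ be the regular hyperbolic $(8g-4)$-gon in the Poincaré unit disk, centered at $0$, with all interior angles equal to $\pi/2$. Label its sides $1,\dots,8g-4$ counterclockwise (indices mod $8g-4$) and its vertices $V_i$ so that side $i$ joins $V_i$ to $V_{i+1}$. The complete geodesic containing side $i$ has endpoints $P_i$ (beyond $V_i$) and $Q_{i+1}$ (beyond $V_{i+1}$) on the unit circle; counterclockwise order on the circle is $P_1,Q_1,P_2,Q_2,\dots,P_{8g-4},Q_{8g-4}$. For a vertex $V$ and a point $X$ on the unit circle, $VX$ denotes the geodesic ray from $V$ to $X$. *)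

theory Defs
  imports "HOL-Analysis.Analysis"
begin

text \<open>Poincare unit disk model. The disk automorphism (hyperbolic isometry)
  sending the point V of the disk to 0. Its derivative at V is the positive real
  1/(1 - |V|^2), so it preserves tangent directions at V; it maps geodesics through
  V to diameters through 0.\<close>
definition mob :: "complex \<Rightarrow> complex \<Rightarrow> complex" where
  "mob V z = (z - V) / (1 - cnj V * z)"

text \<open>Unit tangent vector at V of the geodesic ray (or segment) from V towards X,
  where X lies in the closed disk and X differs from V.\<close>
definition hdir :: "complex \<Rightarrow> complex \<Rightarrow> complex" where
  "hdir V X = mob V X / complex_of_real (cmod (mob V X))"

definition hangle :: "complex \<Rightarrow> complex \<Rightarrow> complex \<Rightarrow> real" where
  "hangle V X Y = arccos (Re (hdir V X * cnj (hdir V Y)))"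

end

theory Submission
  imports Defs
begin

text \<open>Move the vertex V to 0 by the disk automorphism mob V. The next vertex goes to a point B
  whose modulus t is tanh of half the side length. The right angles at both ends of that side make
  the image of the previous side and the image of the geodesic carrying the next side perpendicular
  to the diameter through B, and locating the ideal endpoint of the latter gives
  (1 - t^2) / (1 + t^2) for the absolute cosine of the angle in question. For the regular
  right-angled n-gon with vertices of modulus r the right angle forces
  (1 + r^2)^2 (1 - cos (2 pi / n)) = (1 + cos (2 pi / n)) (1 - r^2)^2, whence
  t^2 = 2 r^2 / (1 + r^2)^2; for n > 6 this exceeds 1/4, so the cosine is below 3/5 < 1/sqrt 2.\<close>

lemma mob_denom_nonzero:
  assumes "cmod W < 1" "cmod Z \<le> 1"
  shows "1 - cnj W * Z \<noteq> 0"
proof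
  assume "1 - cnj W * Z = 0"
  hence "cmod (cnj W * Z) = 1" by simp
  moreover have "cmod (cnj W * Z) \<le> cmod W"
    using assms by (simp add: norm_mult mult_left_le)
  ultimately show False using assms by simp
qed

lemma norm_mob_denom_identity:
  "cmod (1 - cnj W * X)^2 - cmod (X - W)^2 = (1 - cmod W^2) * (1 - cmod X^2)"
proof -
  have "complex_of_real (cmod (1 - cnj W * X)^2 - cmod (X - W)^2)
      = complex_of_real ((1 - cmod W^2) * (1 - cmod X^2))"
    by (simp only: of_real_diff of_real_mult of_real_1 complex_norm_square)
      (simp add: algebra_simps)
  thus ?thesis using of_real_eq_iff by blast
qed

lemma norm_mob: "cmod (mob W X) = cmod (X - W) / cmod (1 - cnj W * X)"
  by (simp add: mob_def norm_divide)

lemma norm_mob_less_1: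
  assumes "cmod W < 1" "cmod X < 1"
  shows "cmod (mob W X) < 1"
proof -
  have "0 < (1 - cmod W^2) * (1 - cmod X^2)"
    using assms by (simp add: abs_square_less_1)
  hence "cmod (X - W)^2 < cmod (1 - cnj W * X)^2"
    using norm_mob_denom_identity[of W X] by linarith
  hence "cmod (X - W) < cmod (1 - cnj W * X)"
    using power_less_imp_less_base by fastforce
  thus ?thesis using mob_denom_nonzero assms by (simp add: norm_mob)
qed

lemma norm_mob_eq_1:
  assumes "cmod W < 1" "cmod X = 1"
  shows "cmod (mob W X) = 1"
proof -
  have "cmod (X - W)^2 = cmod (1 - cnj W * X)^2"
    using norm_mob_denom_identity[of W X] assms by simp
  hence "cmod (X - W) = cmod (1 - cnj W * X)"
    using power2_eq_iff_nonneg by fastforce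
  thus ?thesis using mob_denom_nonzero assms by (simp add: norm_mob)
qed

lemma mob_eq_0_iff:
  assumes "cmod W < 1" "cmod X \<le> 1"
  shows "mob W X = 0 \<longleftrightarrow> X = W"
  using mob_denom_nonzero[OF assms] by (auto simp: mob_def)

lemma mob_self [simp]: "mob W W = 0"
  by (simp add: mob_def)

lemma norm_mob_commute: "cmod (mob W X) = cmod (mob X W)"
proof -
  have "cmod (1 - cnj X * W) = cmod (cnj (1 - cnj X * W))"
    by (rule complex_mod_cnj[symmetric])
  also have "cnj (1 - cnj X * W) = 1 - cnj W * X"
    by (simp add: mult.commute)
  finally show ?thesis by (simp add: norm_mob norm_minus_commute)
qed

lemma mob_rotate:
  assumes "cmod c = 1"
  shows "mob (c * a) (c * b) = c * mob a b"
proof -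
  have "cnj c * c = 1"
    using complex_norm_square[of c] assms by (simp add: mult.commute)
  hence "cnj (c * a) * (c * b) = cnj a * b"
    by (metis complex_cnj_mult mult.assoc mult.left_commute mult_1)
  moreover have "c * b - c * a = c * (b - a)" by (simp add: algebra_simps)
  ultimately show ?thesis by (simp add: mob_def)
qed

lemma mob_mob:
  assumes "cmod W < 1" "cmod X < 1" "cmod Z \<le> 1"
  shows "mob (mob W X) (mob W Z) = ((1 - W * cnj X) / (1 - cnj W * X)) * mob X Z"
proof -
  define a where "a = 1 - cnj W * Z"
  define d where "d = 1 - cnj W * X"
  define d' where "d' = 1 - W * cnj X"
  define w where "w = 1 - cnj W * W"
  have "d \<noteq> 0" "a \<noteq> 0" "w \<noteq> 0"
    unfolding a_def d_def w_def using mob_denom_nonzero assms by auto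
  moreover have "d' \<noteq> 0"
    using \<open>d \<noteq> 0\<close> unfolding d_def d'_def
    by (metis complex_cnj_cnj complex_cnj_diff complex_cnj_mult complex_cnj_one complex_cnj_zero)
  moreover have num: "mob W Z - mob W X = (Z - X) * w / (a * d)"
  proof -
    have "mob W Z - mob W X = ((Z - W) * d - (X - W) * a) / (a * d)"
      using \<open>d \<noteq> 0\<close> \<open>a \<noteq> 0\<close> by (simp add: mob_def a_def d_def diff_frac_eq)
    also have "(Z - W) * d - (X - W) * a = (Z - X) * w"
      unfolding a_def d_def w_def by (simp add: algebra_simps)
    finally show ?thesis .
  qed
  moreover have den: "1 - cnj (mob W X) * mob W Z = w * (1 - cnj X * Z) / (d' * a)"
  proof -
    have XZ: "cnj (mob W X) = (cnj X - cnj W) / d'" "mob W Z = (Z - W) / a"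
      by (simp_all add: mob_def a_def d'_def)
    have "1 - cnj (mob W X) * mob W Z = (d' * a - (cnj X - cnj W) * (Z - W)) / (d' * a)"
      unfolding XZ using \<open>d' \<noteq> 0\<close> \<open>a \<noteq> 0\<close> by (simp add: field_simps)
    also have "d' * a - (cnj X - cnj W) * (Z - W) = w * (1 - cnj X * Z)"
      unfolding a_def d'_def w_def by (simp add: algebra_simps)
    finally show ?thesis .
  qed
  ultimately have "(Z - X) * w / (a * d) / (w * (1 - cnj X * Z) / (d' * a))
      = (d' / d) * ((Z - X) / (1 - cnj X * Z))"
    by (cases "1 - cnj X * Z = 0") (simp_all add: field_simps)
  thus ?thesis unfolding mob_def[of "mob W X"] num den by (simp add: mob_def d_def d'_def)
qed

lemma norm_mob_mob_factor:
  assumes "cmod W < 1" "cmod X < 1"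
  shows "cmod ((1 - W * cnj X) / (1 - cnj W * X)) = 1"
proof -
  have "1 - W * cnj X = cnj (1 - cnj W * X)" by simp
  hence "cmod (1 - W * cnj X) = cmod (1 - cnj W * X)" by (metis complex_mod_cnj)
  thus ?thesis using mob_denom_nonzero assms by (simp add: norm_divide)
qed

lemma mob_inverse:
  assumes "cmod B < 1" "cmod Z \<le> 1"
  shows "mob (- B) (mob B Z) = Z"
  using mob_mob[of B 0 Z] assms by (simp add: mob_def)

lemma hdir_eq_mob:
  assumes "cmod W < 1" "cmod F = 1"
  shows "hdir W F = mob W F"
  using norm_mob_eq_1[OF assms] by (simp add: hdir_def)

lemma hangle_commute: "hangle V X Y = hangle V Y X"
proof -
  have "Re (a * cnj b) = Re (b * cnj a)" for a b :: complex by simp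
  thus ?thesis unfolding hangle_def by metis
qed

lemma hangle_eq_pi_half_imp_orthogonal:
  assumes "cmod W < 1" "cmod A \<le> 1" "cmod C \<le> 1" "A \<noteq> W" "C \<noteq> W"
    and "hangle W A C = pi / 2"
  shows "Re (mob W A * cnj (mob W C)) = 0"
proof -
  have nz: "mob W A \<noteq> 0" "mob W C \<noteq> 0" using mob_eq_0_iff assms by auto
  define x where "x = Re (hdir W A * cnj (hdir W C))"
  have "cmod (hdir W A * cnj (hdir W C)) = 1"
    using nz by (simp add: hdir_def norm_mult norm_divide)
  hence "cos (arccos x) = x"
    unfolding x_def by (metis abs_Re_le_cmod cos_arccos_abs)
  moreover have "arccos x = pi / 2" using assms(6) by (simp add: hangle_def x_def)
  ultimately have "x = 0" by simp
  moreover have "x = Re (mob W A * cnj (mob W C)) / (cmod (mob W A) * cmod (mob W C))"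
    unfolding x_def hdir_def by (simp add: Re_divide_of_real)
  ultimately show ?thesis using nz by simp
qed

lemma orthogonal_imp_ii_multiple:
  assumes "Re (u * cnj v) = 0" "v \<noteq> 0"
  obtains k :: real where "u = \<i> * of_real k * v"
proof
  have "u * cnj v = \<i> * of_real (Im (u * cnj v))"
    using assms(1) by (simp add: complex_eq_iff)
  hence "u * of_real (cmod v ^ 2) = \<i> * of_real (Im (u * cnj v)) * v"
    by (metis complex_norm_square mult.assoc mult.commute)
  thus "u = \<i> * of_real (Im (u * cnj v) / cmod v ^ 2) * v"
    using assms(2) by (simp add: field_simps)
qed

lemma arccos_gt_pi_div_4:
  assumes "-1 \<le> x" "x < 3/5"
  shows "arccos x > pi / 4"
proof -
  have "sqrt 2 < 5/3" by (rule real_less_lsqrt) (auto simp: power2_eq_square)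
  hence "3/5 < 1 / sqrt 2" by (simp add: field_simps)
  moreover have "1 / sqrt 2 \<le> 1" by (simp add: field_simps)
  ultimately have "arccos (1 / sqrt 2) < arccos x"
    using assms by (intro arccos_less_arccos) auto
  thus ?thesis by (simp add: arccos_one_over_sqrt_2)
qed

lemma perpendicular_geodesic_endpoint_cos:
  assumes B: "B \<noteq> 0" "cmod B < 1"
    and p: "cmod p = 1" "Re (mob B p * cnj B) = 0"
    and n: "cmod n = 1" "Re (n * cnj B) = 0"
  shows "\<bar>Re (p * cnj n)\<bar> = (1 - cmod B ^ 2) / (1 + cmod B ^ 2)"
proof -
  define t where "t = cmod B"
  obtain k where k: "mob B p = \<i> * of_real k * B"
    using orthogonal_imp_ii_multiple p(2) B(1) by blast
  obtain m where m: "n = \<i> * of_real m * B"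
    using orthogonal_imp_ii_multiple n(2) B(1) by blast
  have kt: "\<bar>k\<bar> * t = 1"
    using norm_mob_eq_1[OF B(2) p(1)] k by (simp add: norm_mult t_def)
  have mt: "\<bar>m\<bar> * t = 1"
    using n(1) m by (simp add: norm_mult t_def)
  have BB: "cnj B * B = of_real (t^2)"
    using complex_norm_square[of B] by (simp add: t_def mult.commute)
  have "p = (mob B p + B) / (1 + cnj B * mob B p)"
    using mob_inverse[of B p] B p by (simp add: mob_def)
  also have "\<dots> = B * (1 + \<i> * of_real k) / (1 + \<i> * of_real (k * t^2))"
    unfolding k using BB by (simp add: algebra_simps)
  finally have "p * cnj n
      = (cnj B * B) * ((1 + \<i> * of_real k) * (- \<i> * of_real m)) / (1 + \<i> * of_real (k * t^2))"
    unfolding m by (simp add: ac_simps)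
  hence "Re (p * cnj n) = (t^2 * m * k - t^2 * m * (k * t^2)) / (1 + (k * t^2)^2)"
    unfolding BB by (simp add: Re_divide algebra_simps power2_eq_square)
  also have "(k * t^2)^2 = t^2"
    using kt by (metis abs_mult_self_eq power2_eq_square power_mult_distrib mult.assoc mult_1)
  finally have "Re (p * cnj n) = (m * t) * (k * t) * (1 - t^2) / (1 + t^2)"
    by (simp add: algebra_simps power2_eq_square)
  moreover have "\<bar>(m * t) * (k * t)\<bar> = 1"
    using kt mt t_def by (simp add: abs_mult)
  moreover have "t^2 < 1"
    using B(2) by (simp add: t_def abs_square_less_1)
  ultimately show ?thesis
    by (simp add: t_def abs_mult abs_divide)
qed

lemma mob_ideal_endpoint_perpendicular:
  assumes disk: "cmod W < 1" "cmod X < 1" "cmod Y < 1" and ideal: "cmod F = 1"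
    and distinct: "X \<noteq> W" "Y \<noteq> X"
    and right: "hangle X W Y = pi / 2" and F: "hdir X F = - hdir X Y"
  shows "Re (mob (mob W X) (mob W F) * cnj (mob W X)) = 0"
proof -
  \<comment> \<open>mob (mob W X) \<circ> mob W agrees with mob X up to the rotation c,
    which preserves orthogonality.\<close>
  define c where "c = (1 - W * cnj X) / (1 - cnj W * X)"
  have c_unit: "c * cnj c = 1"
    using complex_norm_square[of c] norm_mob_mob_factor disk by (simp add: c_def)
  have move: "mob (mob W X) (mob W Z) = c * mob X Z" if "cmod Z \<le> 1" for Z
    using mob_mob disk that by (simp add: c_def)
  have "- mob W X = c * mob X W"
    using move[of W] disk by (simp add: mob_def)
  hence "cnj (mob W X) = - cnj c * cnj (mob X W)"
    by (metis complex_cnj_minus complex_cnj_mult minus_minus mult_minus_left)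
  moreover have "mob X F = - mob X Y / of_real (cmod (mob X Y))"
    using F hdir_eq_mob disk ideal by (simp add: hdir_def)
  ultimately have "mob (mob W X) (mob W F) * cnj (mob W X)
      = (mob X Y * cnj (mob X W)) / of_real (cmod (mob X Y))"
    using move[of F] ideal c_unit by (simp add: ac_simps)
  moreover have "Re (mob X W * cnj (mob X Y)) = 0"
    using hangle_eq_pi_half_imp_orthogonal right disk distinct by auto
  ultimately show ?thesis
    by (simp add: Re_divide_of_real mult.commute)
qed

lemma hangle_ideal_endpoints_gt_pi_div_4:
  assumes disk: "cmod W < 1" "cmod X < 1" "cmod Y < 1" "cmod U < 1"
    and ideal: "cmod F = 1" "cmod N = 1"
    and distinct: "X \<noteq> W" "Y \<noteq> X" "U \<noteq> W"
    and right_W: "hangle W U X = pi / 2" and right_X: "hangle X W Y = pi / 2"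
    and F: "hdir X F = - hdir X Y" and N: "hdir W N = - hdir W U"
    and long: "cmod (mob W X) > 1 / 2"
  shows "hangle W F N > pi / 4"
proof -
  define B where "B = mob W X"
  have B: "B \<noteq> 0" "cmod B < 1"
    using mob_eq_0_iff norm_mob_less_1 disk distinct by (auto simp: B_def)
  have "Re (mob W N * cnj B) = 0"
  proof -
    have "mob W N = - mob W U / of_real (cmod (mob W U))"
      using N hdir_eq_mob disk ideal by (simp add: hdir_def)
    moreover have "Re (mob W U * cnj B) = 0"
      unfolding B_def using hangle_eq_pi_half_imp_orthogonal right_W disk distinct by auto
    ultimately show ?thesis
      by (simp add: Re_divide_of_real)
  qed
  hence "\<bar>Re (mob W F * cnj (mob W N))\<bar> = (1 - cmod B ^ 2) / (1 + cmod B ^ 2)"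
    using perpendicular_geodesic_endpoint_cos[OF B] mob_ideal_endpoint_perpendicular[OF disk(1-3)]
      norm_mob_eq_1 disk ideal distinct right_X F by (auto simp: B_def)
  also have "\<dots> < 3 / 5"
  proof -
    have "1 / 4 < cmod B ^ 2"
      using power_strict_mono[OF long, of 2] by (simp add: B_def power2_eq_square)
    thus ?thesis by (simp add: field_simps)
  qed
  finally have "-1 \<le> Re (mob W F * cnj (mob W N))" "Re (mob W F * cnj (mob W N)) < 3 / 5"
    by linarith+
  thus ?thesis
    unfolding hangle_def using arccos_gt_pi_div_4 disk ideal by (simp add: hdir_eq_mob)
qed

lemma sin_mult_self: "sin \<theta> * sin \<theta> = 1 - cos \<theta> * cos (\<theta> :: real)"
  using sin_cos_squared_add3[of \<theta>] by linarith

lemma right_angle_at_real_point_relation: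
  fixes r \<theta> :: real
  assumes r: "0 < r" "r < 1" and c: "cos \<theta> < 1"
    and right: "Re ((mob r (r * cis \<theta>))^2) = 0"
  shows "(1 + r^2)^2 * (1 - cos \<theta>) = (1 + cos \<theta>) * (1 - r^2)^2"
proof -
  define s where "s = r^2"
  define E where "E = 1 - of_real s * cis \<theta>"
  define w where "w = (cis \<theta> - 1) * cnj E"
  have "E \<noteq> 0"
    using mob_denom_nonzero[of "of_real r" "of_real r * cis \<theta>"] r
    by (simp add: E_def s_def norm_mult power2_eq_square mult.assoc)
  have "mob r (r * cis \<theta>) = of_real r * (cis \<theta> - 1) / E"
    by (simp add: mob_def E_def s_def power2_eq_square algebra_simps)
  also have "\<dots> = of_real (r / cmod E ^ 2) * w"
    using \<open>E \<noteq> 0\<close> by (simp add: w_def field_simps complex_norm_square del: of_real_power)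
  finally have "(mob r (r * cis \<theta>))^2 = of_real ((r / cmod E ^ 2)^2) * w^2"
    by (simp only: power_mult_distrib of_real_power)
  hence "Re (w^2) = 0"
    using right r \<open>E \<noteq> 0\<close> by simp
  moreover have "Re w = (1 + s) * (cos \<theta> - 1)" "Im w = sin \<theta> * (1 - s)"
    by (simp_all add: w_def E_def algebra_simps sin_mult_self)
  ultimately have "(1 - cos \<theta>) * ((1 + s)^2 * (1 - cos \<theta>) - (1 + cos \<theta>) * (1 - s)^2) = 0"
    by (simp add: power2_eq_square algebra_simps sin_mult_self)
  thus ?thesis using c by (simp add: s_def)
qed

lemma right_angle_at_real_point_norm_mob:
  fixes r \<theta> :: real
  assumes r: "0 < r" "r < 1" and c: "cos \<theta> < 1"
    and right: "Re ((mob r (r * cis \<theta>))^2) = 0"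
  shows "cmod (mob r (r * cis \<theta>)) ^ 2 = 2 * r^2 / (1 + r^2)^2"
proof -
  define s where "s = r^2"
  define E where "E = 1 - of_real s * cis \<theta>"
  have "cmod E ^ 2 = 1 - 2 * s * cos \<theta> + s^2"
    unfolding cmod_power2 E_def by (simp add: power2_eq_square algebra_simps sin_mult_self)
  also have "\<dots> = (1 + s)^2 * (1 - cos \<theta>)"
    using right_angle_at_real_point_relation[OF assms]
    by (simp add: s_def power2_eq_square algebra_simps)
  finally have norm_E: "cmod E ^ 2 = (1 + s)^2 * (1 - cos \<theta>)" .
  have "cmod (cis \<theta> - 1) ^ 2 = 2 * (1 - cos \<theta>)"
    unfolding cmod_power2 by (simp add: power2_eq_square algebra_simps sin_mult_self)
  moreover have "mob r (r * cis \<theta>) = of_real r * (cis \<theta> - 1) / E"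
    by (simp add: mob_def E_def s_def power2_eq_square algebra_simps)
  ultimately have "cmod (mob r (r * cis \<theta>)) ^ 2 = (2 * s) * (1 - cos \<theta>) / cmod E ^ 2"
    by (simp add: norm_mult norm_divide power_divide power_mult_distrib s_def)
  also have "\<dots> = 2 * s / (1 + s)^2"
    unfolding norm_E using c by simp
  finally show ?thesis by (simp add: s_def)
qed

lemma right_angle_at_real_point_imp_norm_mob_gt_half:
  fixes r \<theta> :: real
  assumes r: "0 < r" "r < 1" and \<theta>: "1 / 2 < cos \<theta>" "0 < sin \<theta>"
    and right: "Re ((mob r (r * cis \<theta>))^2) = 0"
  shows "cmod (mob r (r * cis \<theta>)) > 1 / 2"
proof -
  define s where "s = r^2"
  have s: "0 < s" "s < 1" using r by (simp_all add: s_def power_less_one_iff)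
  have "cos \<theta> ^ 2 < 1"
    using \<theta>(2) sin_squared_eq[of \<theta>] by (smt (verit) zero_less_power)
  hence c: "cos \<theta> < 1"
    by (simp add: abs_square_less_1 abs_less_iff)
  have "(1 - cos \<theta>) * (3 * (1 - s)^2) < (1 + cos \<theta>) * (1 - s)^2"
    using \<theta>(1) c s by (simp add: mult.assoc[symmetric] mult_strict_right_mono)
  also have "\<dots> = (1 - cos \<theta>) * (1 + s)^2"
    using right_angle_at_real_point_relation[OF r c right] by (simp add: s_def mult.commute)
  finally have "3 * (1 - s)^2 < (1 + s)^2"
    using c by simp
  hence "(1 + s)^2 < 8 * s"
    using s by (simp add: power2_eq_square algebra_simps)
  hence "(1 / 2)^2 < 2 * s / (1 + s)^2"
    using s by (simp add: field_simps)
  also have "\<dots> = cmod (mob r (r * cis \<theta>)) ^ 2"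
    using right_angle_at_real_point_norm_mob[OF r c right] by (simp add: s_def)
  finally show ?thesis by (rule power_less_imp_less_base) simp
qed

lemma right_angle_imp_norm_mob_gt_half:
  fixes r \<alpha> \<theta> :: real
  assumes r: "0 < r" "r < 1" and \<theta>: "1 / 2 < cos \<theta>" "0 < sin \<theta>"
    and right: "hangle (r * cis \<alpha>) (r * cis (\<alpha> - \<theta>)) (r * cis (\<alpha> + \<theta>)) = pi / 2"
  shows "cmod (mob (r * cis \<alpha>) (r * cis (\<alpha> + \<theta>))) > 1 / 2"
proof -
  define B where "B = mob r (r * cis \<theta>)"
  have rotate: "mob (r * cis \<alpha>) (r * cis (\<alpha> + t)) = cis \<alpha> * mob r (r * cis t)" for t
    using mob_rotate[of "cis \<alpha>" r "r * cis t"] by (simp add: cis_mult [symmetric] ac_simps)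
  have neighbour: "r * cis (\<alpha> + t) \<noteq> r * cis \<alpha>" if "sin t \<noteq> 0" for t
  proof
    assume "r * cis (\<alpha> + t) = r * cis \<alpha>"
    hence "cis \<alpha> * (r * cis t) = cis \<alpha> * r"
      by (simp add: cis_mult[symmetric] ac_simps)
    hence "cis t = 1" using r by simp
    thus False using that by (metis cis.sel(2) one_complex.sel(2))
  qed
  have "Re (mob (r * cis \<alpha>) (r * cis (\<alpha> + - \<theta>))
      * cnj (mob (r * cis \<alpha>) (r * cis (\<alpha> + \<theta>)))) = 0"
    using hangle_eq_pi_half_imp_orthogonal[of "r * cis \<alpha>"] right
      neighbour[of \<theta>] neighbour[of "- \<theta>"] r \<theta>
    by (simp add: norm_mult)
  moreover have "mob r (r * cis (- \<theta>)) = cnj B"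
    by (simp add: B_def mob_def cis_cnj)
  ultimately have "Re (cis \<alpha> * cnj B * cnj (cis \<alpha> * B)) = 0"
    unfolding rotate B_def[symmetric] by simp
  moreover have "cis \<alpha> * cnj B * cnj (cis \<alpha> * B) = (cis \<alpha> * cnj (cis \<alpha>)) * cnj (B^2)"
    by (simp add: power2_eq_square ac_simps)
  moreover have "cis \<alpha> * cnj (cis \<alpha>) = 1"
    by (simp add: cis_cnj cis_mult)
  ultimately have "Re (cnj (B^2)) = 0" by (metis mult_1)
  hence "Re (B^2) = 0" by (simp only: cnj.sel(1))
  thus ?thesis
    using right_angle_at_real_point_imp_norm_mob_gt_half r \<theta> rotate[of \<theta>]
    by (simp add: B_def norm_mult)
qed

text \<open>cmod (mob W X) is tanh of half the hyperbolic distance from W to X, so the sides of a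
  long chain are longer than 2 artanh (1/2).\<close>
definition long_right_angled_chain :: "(int \<Rightarrow> complex) \<Rightarrow> bool" where
  "long_right_angled_chain U \<longleftrightarrow>
    (\<forall>k. cmod (U k) < 1 \<and> U (k + 1) \<noteq> U k
      \<and> hangle (U k) (U (k - 1)) (U (k + 1)) = pi / 2 \<and> cmod (mob (U k) (U (k + 1))) > 1 / 2)"

lemma long_right_angled_chainD:
  assumes "long_right_angled_chain U"
  shows "cmod (U k) < 1" "U (k + 1) \<noteq> U k" "hangle (U k) (U (k - 1)) (U (k + 1)) = pi / 2"
    and "cmod (mob (U k) (U (k + 1))) > 1 / 2"
  using assms unfolding long_right_angled_chain_def by auto

lemma long_right_angled_chain_reverse:
  assumes "long_right_angled_chain U"
  shows "long_right_angled_chain (\<lambda>k. U (- k))"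
  unfolding long_right_angled_chain_def
proof (intro allI conjI)
  fix k :: int
  note chain = long_right_angled_chainD[OF assms]
  have shift: "- (k + 1) + 1 = - k" "- (k + 1) = - k - 1" "- (k - 1) = - k + 1" by simp_all
  show "cmod (U (- k)) < 1" using chain(1) .
  show "U (- (k + 1)) \<noteq> U (- k)"
    using chain(2)[of "- (k + 1)"] unfolding shift(1) by metis
  show "hangle (U (- k)) (U (- (k - 1))) (U (- (k + 1))) = pi / 2"
    using chain(3)[of "- k"] hangle_commute unfolding shift(2,3) by metis
  show "cmod (mob (U (- k)) (U (- (k + 1)))) > 1 / 2"
    using chain(4)[of "- (k + 1)"] norm_mob_commute unfolding shift(1) by metis
qed

lemma long_right_angled_chain_hangle_gt_pi_div_4:
  assumes chain: "long_right_angled_chain U"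
    and ideal: "cmod F = 1" "cmod N = 1"
    and F: "hdir (U (j + 1)) F = - hdir (U (j + 1)) (U (j + 2))"
    and N: "hdir (U j) N = - hdir (U j) (U (j - 1))"
  shows "hangle (U j) F N > pi / 4"
proof -
  note chain_at = long_right_angled_chainD[OF chain]
  have "U (j + 2) \<noteq> U (j + 1)" "hangle (U (j + 1)) (U j) (U (j + 2)) = pi / 2"
    using chain_at(2,3)[of "j + 1"] by (simp_all add: add.assoc)
  moreover have "U (j - 1) \<noteq> U j"
    using chain_at(2)[of "j - 1"] by simp
  ultimately show ?thesis
    using hangle_ideal_endpoints_gt_pi_div_4[OF chain_at(1)[of j] chain_at(1)[of "j + 1"]
        chain_at(1)[of "j + 2"] chain_at(1)[of "j - 1"] ideal] chain_at(2-4)[of j] F N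
    by auto
qed

lemma regular_right_angled_polygon_long_chain:
  fixes n :: nat and r \<phi> :: real and V :: "int \<Rightarrow> complex"
  assumes n: "6 < n" and r: "0 < r" "r < 1"
    and V: "\<And>k. V k = r * cis (\<phi> + 2 * pi * real_of_int k / real n)"
    and right: "\<And>k. hangle (V k) (V (k - 1)) (V (k + 1)) = pi / 2"
  shows "long_right_angled_chain V"
  unfolding long_right_angled_chain_def
proof (intro allI conjI)
  fix k :: int
  define \<theta> where "\<theta> = 2 * pi / n"
  define \<alpha> where "\<alpha> = \<phi> + 2 * pi * real_of_int k / real n"
  have "\<alpha> - \<theta> = \<phi> + 2 * pi * real_of_int (k - 1) / real n"
    "\<alpha> + \<theta> = \<phi> + 2 * pi * real_of_int (k + 1) / real n"
    unfolding \<alpha>_def \<theta>_def using n by (simp_all add: field_simps)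
  hence neighbours: "V k = r * cis \<alpha>" "V (k - 1) = r * cis (\<alpha> - \<theta>)"
    "V (k + 1) = r * cis (\<alpha> + \<theta>)"
    unfolding V by (simp_all only: \<alpha>_def)
  have "0 < \<theta>" "\<theta> < pi / 3"
    using n by (simp_all add: \<theta>_def field_simps)
  hence "cos (pi / 3) < cos \<theta>" "0 < sin \<theta>"
    by (auto intro: cos_monotone_0_pi sin_gt_zero)
  hence long: "cmod (mob (V k) (V (k + 1))) > 1 / 2"
    using right_angle_imp_norm_mob_gt_half r right[of k] by (simp add: neighbours cos_60)
  thus "cmod (mob (V k) (V (k + 1))) > 1 / 2" "V (k + 1) \<noteq> V k"
    by auto
  show "cmod (V k) < 1"
    using r by (simp add: neighbours norm_mult)
  show "hangle (V k) (V (k - 1)) (V (k + 1)) = pi / 2"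
    by (rule right)
qed

theorem lemma8p1:
  fixes g :: nat and r \<phi> :: real and V P Q :: "int \<Rightarrow> complex"
  assumes g: "g \<ge> 2"
    and r: "0 < r" "r < 1"
    and V: "\<forall>k. V k = complex_of_real r * cis (\<phi> + 2 * pi * real_of_int k / real (8 * g - 4))"
    and right_angles: "\<forall>k. hangle (V k) (V (k - 1)) (V (k + 1)) = pi / 2"
    and P: "\<forall>i. cmod (P i) = 1 \<and> hdir (V i) (P i) = - hdir (V i) (V (i + 1))"
    and Q: "\<forall>i. cmod (Q (i + 1)) = 1 \<and> hdir (V (i + 1)) (Q (i + 1)) = - hdir (V (i + 1)) (V i)"
  shows "\<forall>i. hangle (V (i + 1)) (P (i + 2)) (Q (i + 1)) > pi / 4
            \<and> hangle (V i) (Q (i - 1)) (P i) > pi / 4"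
proof (intro allI conjI)
  fix i :: int
  have chain: "long_right_angled_chain V"
    using regular_right_angled_polygon_long_chain[of "8 * g - 4" r V \<phi>] g r V right_angles
    by auto
  have forward: "i + 1 + 1 = i + 2" "i + 1 + 2 = i + 3" "i + 2 + 1 = i + 3" "i + 1 - 1 = i"
    by simp_all
  show "hangle (V (i + 1)) (P (i + 2)) (Q (i + 1)) > pi / 4"
    using long_right_angled_chain_hangle_gt_pi_div_4[OF chain, of "P (i + 2)" "Q (i + 1)" "i + 1"]
      P[rule_format, of "i + 2"] Q[rule_format, of i]
    unfolding forward by blast
  have backward: "- (- i + 1) = i - 1" "- (- i + 2) = i - 2" "- (- i - 1) = i + 1" "i - 2 + 1 = i - 1"
    by simp_all
  show "hangle (V i) (Q (i - 1)) (P i) > pi / 4"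
    using long_right_angled_chain_hangle_gt_pi_div_4[OF long_right_angled_chain_reverse[OF chain],
        of "Q (i - 1)" "P i" "- i"] P[rule_format, of i] Q[rule_format, of "i - 2"]
    unfolding backward by simp
qed

end
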